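(* In the standing setup, for all $S,T\in\mathfrak{S}$ we have $|\mathcal{N}_{(S,T)}|\le\gcd(\mathrm{eff}(\sigma^+_S),-\mathrm{eff}(\sigma^-_T))$ (whenever $\mathcal{N}_{(S,T)}\neq\emptyset$, so that both cycles are defined).
   Context: $\mathbb{N}=\{0,1,2,\dots\}$. A one-counter system (OCS) $\mathcal{O}$ consists of a finite set $Q$ of states, a set $T_{>0}\subseteq Q\times\{-1,0,1\}\times Q$ of non-zero transitions and a set $T_{=0}\subseteq Q\times\{0,1\}\times Q$ of zero tests. A configuration is a pair $(q,c)\in Q\times\mathbb{N}$ (state $q$, counter value $c$). A transition $t=(p,d,q)$ has source $p$, target $q$, effect $d$; it can be fired in $(p,c)$ if either $t\in T_{>0}$ and $c>0$, or $t\in T_{=0}$ and $c=0$, yielding $(q,c+d)$. A path is a sequence $(\gamma_1,t_1)\cdots(\gamma_m,t_m)$ such that, with some $\gamma_{m+1}$, firing $t_i$ in $\gamma_i$ yields $\gamma_{i+1}$ for all $i\le m$; its source is $\gamma_1$, target $\gamma_{m+1}$, length $\mathrm{len}=m$, configurations appearing on it are $\gamma_1,\dots,\gamma_{m+1}$, intermediate ones are $\gamma_2,\dots,\gamma_m$; its projection is $\mathrm{proj}=t_1\cdots t_m$ and its effect $\mathrm{eff}$ is the sum of the effects of its transitions. A sequence of transitions is consistent if each transition's target is the next one's source. A cycle is a consistent sequence of non-zero transitions starting and ending in the same state (its base state); positive/negative if its effect is positive/negative; simple if no state is visited twice except the base at start and end. The transition multigraph $G$ has vertices $Q$ and an edge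 $p\to q$ labelled $d$ for each $(p,d,q)\in T_{>0}$; $\mathfrak{S}$ is the set of its SCCs and $n_S$ the number of states in $S\in\mathfrak{S}$. A cycle is contained in $S$ if all its states lie in $S$; $S$ is positively (negatively) enabled if it contains a positive (negative) cycle. For every positively enabled $S$ a simple positive cycle $\sigma^+_S$ contained in $S$ is fixed, and for every negatively enabled $T$ a simple negative cycle $\sigma^-_T$ contained in $T$. An arc is a path whose source and target have counter value $0$ and whose intermediate configurations have positive counter value. A path is low if all configurations appearing on it have counter value $<5n$, where $n=|Q|$. For $S,T\in\mathfrak{S}$, an arc $\rho$ is $(S,T)$-normal if $\rho=\rho_{\mathrm{pref}}\rho_{\mathrm{up}}\rho_{\mathrm{cap}}\rho_{\mathrm{down}}\rho_{\mathrm{suff}}$ (normal decomposition) with $\rho_{\mathrm{pref}},\rho_{\mathrm{suff}}$ low, $\mathrm{proj}(\rho_{\mathrm{up}})=(\sigma^+_S)^a$, $\mathrm{proj}(\rho_{\mathrm{down}})=(\sigma^-_T)^b$ for some $a,b\in\mathbb{N}$, the source of $\rho_{\mathrm{cap}}$ having the base state of $\sigma^+_S$ and its target the base state of $\sigma^-_T$. Writing $A=\mathrm{eff}(\sigma^+_S)$, $B=-\mathrm{eff}(\sigma^-_T)$, such a decomposition is good if: (iii) $aA\le 2\,\mathrm{len}(\rho_{\mathrm{cap}})+2\,\mathrm{lcm}(A,B)$; (iv) $bB\le 2\,\mathrm{len}(\rho_{\mathrm{cap}})+2\,\mathrm{lcm}(A,B)$; (v) no infix of $\mathrm{proj}(\rho_{\mathrm{cap}})$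 is a cycle with effect divisible by $\gcd(A,B)$; (vi) the target of $\rho_{\mathrm{up}}$ and the source of $\rho_{\mathrm{down}}$ have counter values $>n$; (vii) all configurations appearing on $\rho_{\mathrm{pref}}$ and $\rho_{\mathrm{suff}}$ together are pairwise distinct. Standing setup: $\alpha,\beta$ are configurations with counter value $0$; $\rho=\rho^1\rho^2\cdots\rho^k$ is a path from $\alpha$ to $\beta$ that has the minimum possible number of appearing configurations with counter value $0$ among all paths from $\alpha$ to $\beta$; each $\rho^i$ is an arc; $\{1,\dots,k\}=\mathcal{L}\sqcup\mathcal{N}$ where for $i\in\mathcal{L}$, $\rho^i$ is a low arc of minimum length among all low arcs with the same source and target, and for $i\in\mathcal{N}$, $\rho^i$ is $(S_i,T_i)$-normal for some $S_i,T_i\in\mathfrak{S}$ with a fixed good normal decomposition $\rho^i=\rho^i_{\mathrm{pref}}\rho^i_{\mathrm{up}}\rho^i_{\mathrm{cap}}\rho^i_{\mathrm{down}}\rho^i_{\mathrm{suff}}$. For $S,T\in\mathfrak{S}$: $\mathcal{N}_{(S,T)}=\{i\in\mathcal{N}: (S_i,T_i)=(S,T)\}$, $\mathcal{N}_{(S,\cdot)}=\{i\in\mathcal{N}:S_i=S\}$, $\mathcal{N}_{(\cdot,T)}=\{i\in\mathcal{N}:T_i=T\}$. *)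

theory Defs
  imports Main
begin

type_synonym 'q trans = "'q \<times> int \<times> 'q"
type_synonym 'q conf = "'q \<times> nat"
text \<open>A path is represented by its source configuration and its projection
  (the sequence of fired transitions); all appearing configurations are determined.\<close>
type_synonym 'q path = "'q conf \<times> 'q trans list"

record 'q ocs =
  states :: "'q set"
  tpos :: "'q trans set"
  tzero :: "'q trans set"

definition wf_ocs :: "'q ocs \<Rightarrow> bool" where
  "wf_ocs M \<longleftrightarrow> finite (states M)
     \<and> tpos M \<subseteq> states M \<times> {-1,0,1} \<times> states M
     \<and> tzero M \<subseteq> states M \<times> {0,1} \<times> states M"

definition src :: "'q trans \<Rightarrow> 'q" where "src t = fst t"
definition eff_t :: "'q trans \<Rightarrow> int" where "eff_t t = fst (snd t)"
definition tgt :: "'q trans \<Rightarrow> 'q" where "tgt t = snd (snd t)"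

definition fire :: "'q ocs \<Rightarrow> 'q conf \<Rightarrow> 'q trans \<Rightarrow> 'q conf option" where
  "fire M c t = (if src t = fst c \<and> ((t \<in> tpos M \<and> snd c > 0) \<or> (t \<in> tzero M \<and> snd c = 0))
                 then Some (tgt t, nat (int (snd c) + eff_t t)) else None)"

fun run :: "'q ocs \<Rightarrow> 'q conf \<Rightarrow> 'q trans list \<Rightarrow> 'q conf option" where
  "run M c [] = Some c"
| "run M c (t # ts) = (case fire M c t of None \<Rightarrow> None | Some c' \<Rightarrow> run M c' ts)"

fun confs :: "'q ocs \<Rightarrow> 'q conf \<Rightarrow> 'q trans list \<Rightarrow> 'q conf list" where
  "confs M c [] = [c]"
| "confs M c (t # ts) = c # (case fire M c t of None \<Rightarrow> [] | Some c' \<Rightarrow> confs M c' ts)"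

definition is_path :: "'q ocs \<Rightarrow> 'q path \<Rightarrow> bool" where
  "is_path M \<rho> \<longleftrightarrow> run M (fst \<rho>) (snd \<rho>) \<noteq> None"

definition source :: "'q path \<Rightarrow> 'q conf" where "source \<rho> = fst \<rho>"
definition target :: "'q ocs \<Rightarrow> 'q path \<Rightarrow> 'q conf" where
  "target M \<rho> = the (run M (fst \<rho>) (snd \<rho>))"
definition len :: "'q path \<Rightarrow> nat" where "len \<rho> = length (snd \<rho>)"

definition configs :: "'q ocs \<Rightarrow> 'q path \<Rightarrow> 'q conf list" where
  "configs M \<rho> = confs M (fst \<rho>) (snd \<rho>)"
definition inter_configs :: "'q ocs \<Rightarrow> 'q path \<Rightarrow> 'q conf list" where
  "inter_configs M \<rho> = butlast (tl (configs M \<rho>))"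

definition eff :: "'q trans list \<Rightarrow> int" where
  "eff ts = sum_list (map eff_t ts)"

fun chain :: "'q ocs \<Rightarrow> 'q conf \<Rightarrow> 'q path list \<Rightarrow> bool" where
  "chain M c [] = True"
| "chain M c (r # rs) = (is_path M r \<and> fst r = c \<and> chain M (target M r) rs)"

definition is_concat :: "'q ocs \<Rightarrow> 'q path \<Rightarrow> 'q path list \<Rightarrow> bool" where
  "is_concat M \<rho> rs \<longleftrightarrow> chain M (fst \<rho>) rs \<and> snd \<rho> = concat (map snd rs)"

fun consistent :: "'q trans list \<Rightarrow> bool" where
  "consistent [] = True"
| "consistent [t] = True"
| "consistent (t # u # ts) = (tgt t = src u \<and> consistent (u # ts))"

definition is_cycle :: "'q ocs \<Rightarrow> 'q trans list \<Rightarrow> bool" where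
  "is_cycle M ts \<longleftrightarrow> ts \<noteq> [] \<and> set ts \<subseteq> tpos M \<and> consistent ts
      \<and> src (hd ts) = tgt (last ts)"

definition base :: "'q trans list \<Rightarrow> 'q" where "base ts = src (hd ts)"

definition simple_cycle :: "'q ocs \<Rightarrow> 'q trans list \<Rightarrow> bool" where
  "simple_cycle M ts \<longleftrightarrow> is_cycle M ts \<and> distinct (map src ts)"

definition contained :: "'q trans list \<Rightarrow> 'q set \<Rightarrow> bool" where
  "contained ts S \<longleftrightarrow> (\<forall>t\<in>set ts. src t \<in> S \<and> tgt t \<in> S)"

definition edges :: "'q ocs \<Rightarrow> ('q \<times> 'q) set" where
  "edges M = {(src t, tgt t) | t. t \<in> tpos M}"

definition sccs :: "'q ocs \<Rightarrow> 'q set set" where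
  "sccs M = {S. \<exists>q\<in>states M. S = {p \<in> states M. (p, q) \<in> (edges M)\<^sup>* \<and> (q, p) \<in> (edges M)\<^sup>*}}"

definition pos_enabled :: "'q ocs \<Rightarrow> 'q set \<Rightarrow> bool" where
  "pos_enabled M S \<longleftrightarrow> (\<exists>ts. is_cycle M ts \<and> contained ts S \<and> eff ts > 0)"
definition neg_enabled :: "'q ocs \<Rightarrow> 'q set \<Rightarrow> bool" where
  "neg_enabled M S \<longleftrightarrow> (\<exists>ts. is_cycle M ts \<and> contained ts S \<and> eff ts < 0)"

definition fixed_cycles :: "'q ocs \<Rightarrow> ('q set \<Rightarrow> 'q trans list) \<Rightarrow> ('q set \<Rightarrow> 'q trans list) \<Rightarrow> bool" where
  "fixed_cycles M sp sn \<longleftrightarrow>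
     (\<forall>S\<in>sccs M. pos_enabled M S \<longrightarrow> simple_cycle M (sp S) \<and> contained (sp S) S \<and> eff (sp S) > 0)
   \<and> (\<forall>T\<in>sccs M. neg_enabled M T \<longrightarrow> simple_cycle M (sn T) \<and> contained (sn T) T \<and> eff (sn T) < 0)"

definition is_arc :: "'q ocs \<Rightarrow> 'q path \<Rightarrow> bool" where
  "is_arc M \<rho> \<longleftrightarrow> is_path M \<rho> \<and> snd (source \<rho>) = 0 \<and> snd (target M \<rho>) = 0
     \<and> (\<forall>c\<in>set (inter_configs M \<rho>). snd c > 0)"

definition is_low :: "'q ocs \<Rightarrow> 'q path \<Rightarrow> bool" where
  "is_low M \<rho> \<longleftrightarrow> (\<forall>c\<in>set (configs M \<rho>). snd c < 5 * card (states M))"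

definition min_low_arc :: "'q ocs \<Rightarrow> 'q path \<Rightarrow> bool" where
  "min_low_arc M \<rho> \<longleftrightarrow> is_arc M \<rho> \<and> is_low M \<rho> \<and>
     (\<forall>\<rho>'. is_arc M \<rho>' \<and> is_low M \<rho>' \<and> source \<rho>' = source \<rho> \<and> target M \<rho>' = target M \<rho>
            \<longrightarrow> len \<rho> \<le> len \<rho>')"

definition good_normal_decomp ::
  "'q ocs \<Rightarrow> ('q set \<Rightarrow> 'q trans list) \<Rightarrow> ('q set \<Rightarrow> 'q trans list) \<Rightarrow> 'q set \<Rightarrow> 'q set
   \<Rightarrow> 'q path \<Rightarrow> 'q path \<Rightarrow> 'q path \<Rightarrow> 'q path \<Rightarrow> 'q path \<Rightarrow> 'q path \<Rightarrow> nat \<Rightarrow> nat \<Rightarrow> bool" where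
  "good_normal_decomp M sp sn S T \<rho> pre up cap down suf a b \<longleftrightarrow>
     (let n = card (states M); A = eff (sp S); B = - eff (sn T) in
     is_concat M \<rho> [pre, up, cap, down, suf]
     \<and> is_low M pre \<and> is_low M suf
     \<and> snd up = concat (replicate a (sp S))
     \<and> snd down = concat (replicate b (sn T))
     \<and> fst (source cap) = base (sp S)
     \<and> fst (target M cap) = base (sn T)
     \<and> int a * A \<le> 2 * int (len cap) + 2 * lcm A B
     \<and> int b * B \<le> 2 * int (len cap) + 2 * lcm A B
     \<and> (\<forall>xs ys zs. snd cap = xs @ ys @ zs \<and> is_cycle M ys \<longrightarrow> \<not> (gcd A B dvd eff ys))
     \<and> snd (target M up) > n \<and> snd (source down) > n
     \<and> distinct (configs M pre @ configs M suf))"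

definition good_normal_arc ::
  "'q ocs \<Rightarrow> ('q set \<Rightarrow> 'q trans list) \<Rightarrow> ('q set \<Rightarrow> 'q trans list) \<Rightarrow> 'q set \<Rightarrow> 'q set
   \<Rightarrow> 'q path \<Rightarrow> bool" where
  "good_normal_arc M sp sn S T \<rho> \<longleftrightarrow> is_arc M \<rho> \<and> S \<in> sccs M \<and> T \<in> sccs M
     \<and> pos_enabled M S \<and> neg_enabled M T
     \<and> (\<exists>pre up cap down suf a b. good_normal_decomp M sp sn S T \<rho> pre up cap down suf a b)"

definition zeros :: "'q ocs \<Rightarrow> 'q path \<Rightarrow> nat" where
  "zeros M \<rho> = length (filter (\<lambda>c. snd c = 0) (configs M \<rho>))"

definition standing_setup ::
  "'q ocs \<Rightarrow> ('q set \<Rightarrow> 'q trans list) \<Rightarrow> ('q set \<Rightarrow> 'q trans list)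
   \<Rightarrow> 'q conf \<Rightarrow> 'q conf \<Rightarrow> 'q path \<Rightarrow> 'q path list \<Rightarrow> nat set \<Rightarrow> nat set
   \<Rightarrow> (nat \<Rightarrow> 'q set) \<Rightarrow> (nat \<Rightarrow> 'q set) \<Rightarrow> bool" where
  "standing_setup M sp sn \<alpha> \<beta> \<rho> rs L N Si Ti \<longleftrightarrow>
     wf_ocs M \<and> fixed_cycles M sp sn
     \<and> snd \<alpha> = 0 \<and> snd \<beta> = 0
     \<and> is_path M \<rho> \<and> source \<rho> = \<alpha> \<and> target M \<rho> = \<beta>
     \<and> (\<forall>\<rho>'. is_path M \<rho>' \<and> source \<rho>' = \<alpha> \<and> target M \<rho>' = \<beta> \<longrightarrow> zeros M \<rho> \<le> zeros M \<rho>')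
     \<and> is_concat M \<rho> rs
     \<and> (\<forall>i<length rs. is_arc M (rs ! i))
     \<and> L \<union> N = {..<length rs} \<and> L \<inter> N = {}
     \<and> (\<forall>i\<in>L. min_low_arc M (rs ! i))
     \<and> (\<forall>i\<in>N. good_normal_arc M sp sn (Si i) (Ti i) (rs ! i))"

end

(* Suppose two (S,T)-normal arcs i < j reach, at the end of their pumping-up phases, counter
   values congruent modulo g = gcd(A, B). By Bezout, some number of extra rounds of the positive
   cycle from arc i's level overshoots arc j's level by a multiple of B; running arc j's cap lifted
   by that amount and then that many extra rounds of the negative cycle lands exactly where arc j's
   pumping-down phase starts. Everything stays above n, so the prefix of arc i, this detour and the
   suffix of arc j form a single arc replacing the whole stretch from arc i to arc j, which loses at
   least the zero configuration ending arc i. This contradicts minimality, so the normal arcs of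
   type (S,T) have pairwise distinct levels modulo g, and there are at most g of them. *)

theory Submission
  imports Defs
begin

lemma run_append:
  "run M c (xs @ ys) = (case run M c xs of None \<Rightarrow> None | Some c' \<Rightarrow> run M c' ys)"
  by (induction xs arbitrary: c) (auto split: option.splits)

lemma run_append_Some: "run M c xs = Some c' \<Longrightarrow> run M c (xs @ ys) = run M c' ys"
  by (simp add: run_append)

lemma run_path: "is_path M p \<Longrightarrow> run M (fst p) (snd p) = Some (target M p)"
  unfolding is_path_def target_def by auto

lemma confs_ne_Nil [simp]: "confs M c ts \<noteq> []"
  by (cases ts) auto

lemma confs_eq_Cons_tl: "confs M c ts = c # tl (confs M c ts)"
  by (cases ts) auto

lemma confs_append:
  "run M c xs = Some c' \<Longrightarrow> confs M c (xs @ ys) = confs M c xs @ tl (confs M c' ys)"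
proof (induction xs arbitrary: c)
  case Nil
  then show ?case using confs_eq_Cons_tl[of M c ys] by simp
next
  case (Cons t xs)
  then show ?case by (auto split: option.splits)
qed

lemma tl_confs_append:
  "run M c xs = Some c' \<Longrightarrow> tl (confs M c (xs @ ys)) = tl (confs M c xs) @ tl (confs M c' ys)"
  by (metis confs_append confs_eq_Cons_tl list.distinct(1) tl_append2)

lemma last_confs: "run M c ts = Some c' \<Longrightarrow> last (confs M c ts) = c'"
  by (induction ts arbitrary: c) (auto split: option.splits)

fun chain_target :: "'q ocs \<Rightarrow> 'q conf \<Rightarrow> 'q path list \<Rightarrow> 'q conf" where
  "chain_target M c [] = c"
| "chain_target M c (r # rs) = chain_target M (target M r) rs"

lemma chain_append: "chain M c (xs @ ys) \<longleftrightarrow> chain M c xs \<and> chain M (chain_target M c xs) ys"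
  by (induction xs arbitrary: c) auto

lemma run_chain: "chain M c rs \<Longrightarrow> run M c (concat (map snd rs)) = Some (chain_target M c rs)"
  by (induction rs arbitrary: c) (auto simp: run_append run_path)

lemma chain_two_members:
  assumes "chain M c rs" "i < j" "j < length rs"
  obtains P P' Q where "concat (map snd rs) = P @ snd (rs ! i) @ P' @ snd (rs ! j) @ Q"
    "run M c P = Some (fst (rs ! i))" "run M (target M (rs ! i)) P' = Some (fst (rs ! j))"
    "is_path M (rs ! i)" "is_path M (rs ! j)"
proof -
  define R1 R2 R3 where "R1 = take i rs" and "R2 = take (j - Suc i) (drop (Suc i) rs)"
    and "R3 = drop (Suc j) rs"
  have "drop (Suc i) rs = R2 @ rs ! j # R3"
    using id_take_nth_drop[of "j - Suc i" "drop (Suc i) rs"] assms(2,3)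
    unfolding R2_def R3_def by (simp add: Suc_diff_Suc)
  then have rs: "rs = R1 @ rs ! i # R2 @ rs ! j # R3"
    using id_take_nth_drop[of i rs] assms(2,3) unfolding R1_def by simp
  have "chain M c (R1 @ rs ! i # R2 @ rs ! j # R3)"
    using assms(1) rs by simp
  then have "chain M c R1" "fst (rs ! i) = chain_target M c R1" "is_path M (rs ! i)"
    "chain M (target M (rs ! i)) R2" "fst (rs ! j) = chain_target M (target M (rs ! i)) R2"
    "is_path M (rs ! j)"
    by (auto simp: chain_append)
  moreover have "concat (map snd rs) = concat (map snd R1) @ snd (rs ! i) @ concat (map snd R2)
      @ snd (rs ! j) @ concat (map snd R3)"
    using arg_cong[OF rs, of "\<lambda>rs. concat (map snd rs)"] by simp
  ultimately show thesis
    using that run_chain by metis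
qed

text \<open>Leaving out the source makes this count additive under concatenation, unlike zeros.\<close>
definition zero_visits :: "'q ocs \<Rightarrow> 'q conf \<Rightarrow> 'q trans list \<Rightarrow> nat" where
  "zero_visits M c ts = length (filter (\<lambda>x. snd x = 0) (tl (confs M c ts)))"

lemma zero_visits_append:
  "run M c xs = Some c' \<Longrightarrow> zero_visits M c (xs @ ys) = zero_visits M c xs + zero_visits M c' ys"
  unfolding zero_visits_def by (simp add: tl_confs_append)

lemma zeros_eq_zero_visits: "zeros M (c, ts) = (if snd c = 0 then 1 else 0) + zero_visits M c ts"
  unfolding zeros_def zero_visits_def configs_def by (subst confs_eq_Cons_tl) simp

lemma zero_visits_eq_0: "\<forall>x\<in>set (tl (confs M c ts)). 0 < snd x \<Longrightarrow> zero_visits M c ts = 0"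
  unfolding zero_visits_def by (auto simp: filter_empty_conv)

lemma zero_visits_ge_1:
  assumes "run M c ts = Some c'" "snd c' = 0" "0 < snd c"
  shows "1 \<le> zero_visits M c ts"
proof (cases ts)
  case Nil
  then show ?thesis using assms by auto
next
  case (Cons t ts')
  then obtain c1 where "fire M c t = Some c1" "run M c1 ts' = Some c'"
    using assms(1) by (cases "fire M c t") auto
  then have "tl (confs M c ts) = confs M c1 ts'" "last (confs M c1 ts') = c'"
    using Cons by (simp_all add: last_confs)
  then have "c' \<in> set (tl (confs M c ts))"
    by (metis confs_ne_Nil last_in_set)
  then have "filter (\<lambda>x. snd x = 0) (tl (confs M c ts)) \<noteq> []"
    using assms(2) by (auto simp: filter_empty_conv)
  then show ?thesis
    unfolding zero_visits_def by (simp add: Suc_le_eq)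
qed

lemma zero_visits_le_of_min_zeros:
  assumes min: "\<forall>\<rho>'. is_path M \<rho>' \<and> source \<rho>' = \<alpha> \<and> target M \<rho>' = \<beta> \<longrightarrow> zeros M \<rho> \<le> zeros M \<rho>'"
    and \<rho>: "is_path M \<rho>" "source \<rho> = \<alpha>" "target M \<rho> = \<beta>" "snd \<rho> = P @ Mid @ Q"
    and P: "run M \<alpha> P = Some c" and Mid: "run M c Mid = Some c'" and New: "run M c New = Some c'"
  shows "zero_visits M c Mid \<le> zero_visits M c New"
proof -
  have "run M \<alpha> (P @ Mid @ Q) = Some \<beta>"
    using run_path[OF \<rho>(1)] \<rho>(2-4) unfolding source_def by simp
  then have Q: "run M c' Q = Some \<beta>"
    using P Mid by (simp add: run_append_Some)
  have "run M \<alpha> (P @ New @ Q) = Some \<beta>"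
    using P New Q by (simp add: run_append_Some)
  then have "zeros M \<rho> \<le> zeros M (\<alpha>, P @ New @ Q)"
    using min[rule_format, of "(\<alpha>, P @ New @ Q)"] unfolding is_path_def source_def target_def by simp
  moreover have "\<rho> = (\<alpha>, P @ Mid @ Q)"
    using \<rho>(2,4) unfolding source_def by (metis prod.collapse)
  ultimately show ?thesis
    using P Mid New by (simp add: zeros_eq_zero_visits zero_visits_append run_append_Some)
qed

lemma eff_Nil [simp]: "eff [] = 0"
  and eff_Cons [simp]: "eff (t # ts) = eff_t t + eff ts"
  unfolding eff_def by simp_all

definition positive_run :: "'q ocs \<Rightarrow> 'q conf \<Rightarrow> 'q trans list \<Rightarrow> 'q conf \<Rightarrow> bool" where
  "positive_run M c ts c' \<longleftrightarrow> run M c ts = Some c' \<and> (\<forall>x\<in>set (confs M c ts). 0 < snd x)"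

lemma positive_run_append:
  assumes "positive_run M c xs c'" "positive_run M c' ys c''"
  shows "positive_run M c (xs @ ys) c''"
  using assms unfolding positive_run_def
  by (auto simp: run_append_Some confs_append dest: list.set_sel(2)[rotated])

lemma zero_visits_positive_run: "positive_run M c ts c' \<Longrightarrow> zero_visits M c ts = 0"
  unfolding positive_run_def by (intro zero_visits_eq_0) (auto dest: list.set_sel(2)[rotated])

lemma positive_run_shift:
  "positive_run M (q, k) ts (q', k') \<Longrightarrow> positive_run M (q, k + d) ts (q', k' + d)"
proof (induction ts arbitrary: q k)
  case Nil
  then show ?case by (simp add: positive_run_def)
next
  case (Cons t ts)
  obtain c1 where fire: "fire M (q, k) t = Some c1" and run: "run M c1 ts = Some (q', k')"
    and pos: "\<forall>x\<in>set (confs M c1 ts). 0 < snd x" and "0 < k"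
    using Cons.prems unfolding positive_run_def by (auto split: option.splits)
  have "0 < snd c1"
    using pos confs_eq_Cons_tl[of M c1 ts] by (metis list.set_intros(1))
  then have c1: "c1 = (tgt t, nat (int k + eff_t t))" "0 < int k + eff_t t"
    and t: "src t = q" "t \<in> tpos M"
    using fire \<open>0 < k\<close> unfolding fire_def by (auto split: if_splits)
  have "fire M (q, k + d) t = Some (tgt t, snd c1 + d)"
    using c1 t \<open>0 < k\<close> unfolding fire_def by auto
  moreover have "positive_run M (tgt t, snd c1 + d) ts (q', k' + d)"
    using Cons.IH[of "tgt t" "snd c1"] run pos c1(1) unfolding positive_run_def by simp
  ultimately show ?case
    using \<open>0 < k\<close> unfolding positive_run_def by simp
qed

text \<open>The length bound suffices because every effect is at least -1.\<close>
lemma positive_run_tpos: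
  assumes wf: "wf_ocs M"
  shows "consistent ts \<Longrightarrow> set ts \<subseteq> tpos M \<Longrightarrow> ts \<noteq> [] \<Longrightarrow> src (hd ts) = q \<Longrightarrow> length ts < c
    \<Longrightarrow> positive_run M (q, c) ts (tgt (last ts), nat (int c + eff ts))"
proof (induction ts arbitrary: q c)
  case Nil
  then show ?case by simp
next
  case (Cons t ts)
  have t: "t \<in> tpos M" "src t = q" "-1 \<le> eff_t t"
    using Cons.prems wf unfolding wf_ocs_def eff_t_def by auto
  then have fire: "fire M (q, c) t = Some (tgt t, nat (int c + eff_t t))"
    using Cons.prems(5) unfolding fire_def by auto
  show ?case
  proof (cases "ts = []")
    case True
    then show ?thesis
      using fire Cons.prems(5) t(3) by (simp add: positive_run_def)
  next
    case False
    then have "consistent ts" "src (hd ts) = tgt t"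
      using Cons.prems(1) by (cases ts; simp)+
    then have "positive_run M (tgt t, nat (int c + eff_t t)) ts
        (tgt (last ts), nat (int (nat (int c + eff_t t)) + eff ts))"
      using Cons.IH[of "tgt t" "nat (int c + eff_t t)"] Cons.prems(2,5) t(3) False by simp
    then show ?thesis
      using fire Cons.prems(5) t(3) False unfolding positive_run_def by (simp add: add.assoc)
  qed
qed

lemma length_simple_cycle: "wf_ocs M \<Longrightarrow> simple_cycle M s \<Longrightarrow> length s \<le> card (states M)"
proof -
  assume wf: "wf_ocs M" and s: "simple_cycle M s"
  then have "set (map src s) \<subseteq> states M" "finite (states M)"
    unfolding wf_ocs_def simple_cycle_def is_cycle_def src_def by auto
  then have "card (set (map src s)) \<le> card (states M)"
    by (simp add: card_mono)
  moreover have "card (set (map src s)) = length s"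
    using s distinct_card unfolding simple_cycle_def by fastforce
  ultimately show ?thesis by simp
qed

lemma positive_run_simple_cycle:
  assumes "wf_ocs M" "simple_cycle M s" "card (states M) < c"
  shows "positive_run M (base s, c) s (base s, nat (int c + eff s))"
  using positive_run_tpos[OF assms(1), of s "base s" c] length_simple_cycle[OF assms(1,2)] assms(2,3)
  unfolding simple_cycle_def is_cycle_def base_def by simp

lemma positive_run_simple_cycle_power:
  assumes wf: "wf_ocs M" and s: "simple_cycle M s"
  shows "\<forall>l\<le>m. int (card (states M)) < int c + int l * eff s
    \<Longrightarrow> positive_run M (base s, c) (concat (replicate m s)) (base s, nat (int c + int m * eff s))"
proof (induction m arbitrary: c)
  case 0
  then show ?case by (simp add: positive_run_def)
next
  case (Suc m)
  define c' where "c' = nat (int c + eff s)"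
  have c': "int c' = int c + eff s"
    using Suc.prems[rule_format, of 1] unfolding c'_def by simp
  have "positive_run M (base s, c) s (base s, c')"
    using positive_run_simple_cycle[OF wf s] Suc.prems[rule_format, of 0] unfolding c'_def by simp
  moreover have "positive_run M (base s, c') (concat (replicate m s)) (base s, nat (int c' + int m * eff s))"
  proof (rule Suc.IH, intro allI impI)
    fix l assume "l \<le> m"
    then show "int (card (states M)) < int c' + int l * eff s"
      using Suc.prems[rule_format, of "Suc l"] c' by (simp add: algebra_simps)
  qed
  ultimately show ?case
    using positive_run_append c' by (fastforce simp: algebra_simps)
qed

lemma bezout_nat_with_large_coeff:
  fixes A B D K :: int
  assumes "0 < A" "0 < B" "gcd A B dvd D"
  obtains x y :: nat where "int x * A - int y * B = D" "K \<le> int x"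
proof -
  obtain u v where uv: "u * A + v * B = gcd A B"
    using bezout_int by blast
  obtain m where m: "D = gcd A B * m"
    using assms(3) by (auto elim: dvdE)
  define t where "t = \<bar>u * m\<bar> + \<bar>v * m\<bar> + \<bar>K\<bar>"
  have "0 \<le> t" unfolding t_def by simp
  then have "t \<le> t * A" "t \<le> t * B"
    using assms(1,2) by (simp_all add: mult_le_cancel_left1)
  moreover have "\<bar>K\<bar> \<le> t - \<bar>u * m\<bar>" "\<bar>v * m\<bar> \<le> t"
    unfolding t_def by simp_all
  ultimately have x: "\<bar>K\<bar> \<le> u * m + t * B" and y: "0 \<le> - v * m + t * A"
    using abs_ge_minus_self[of "u * m"] abs_ge_self[of "v * m"] by linarith+
  have "(u * m + t * B) * A - (- v * m + t * A) * B = D"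
    using m by (simp add: algebra_simps flip: uv)
  with x y show thesis
    by (intro that[of "nat (u * m + t * B)" "nat (- v * m + t * A)"]) auto
qed

lemma arc_prefix_positive:
  assumes "is_arc M r" "snd r = xs @ ys" "run M (fst r) xs = Some c" "0 < snd c"
  shows "\<forall>x\<in>set (tl (confs M (fst r) xs)). 0 < snd x"
proof
  let ?L = "tl (confs M (fst r) xs)" and ?R = "tl (confs M c ys)"
  fix x assume x: "x \<in> set ?L"
  have inter: "\<forall>y\<in>set (butlast (?L @ ?R)). 0 < snd y"
    using assms(1-3) tl_confs_append[OF assms(3), of ys]
    unfolding is_arc_def inter_configs_def configs_def by simp
  show "0 < snd x"
  proof (cases "x = last ?L")
    case True
    have "last ?L = c"
      using x last_confs[OF assms(3)] by (metis empty_iff last_tl list.set(1))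
    then show ?thesis using True assms(4) by simp
  next
    case False
    then have "x \<in> set (butlast ?L)"
      using x by (metis append_butlast_last_id empty_iff list.set(1) rotate1.simps(2) set_ConsD set_rotate1)
    then have "x \<in> set (butlast (?L @ ?R))"
      by (auto simp: butlast_append dest: in_set_butlastD)
    then show ?thesis using inter by blast
  qed
qed

lemma good_normal_decomp_runs:
  assumes arc: "is_arc M r"
    and dec: "good_normal_decomp M sp sn S T r pre up cap down suf a b"
  defines "u \<equiv> snd (target M up)" and "v \<equiv> snd (target M cap)"
  shows "run M (fst r) (snd pre @ snd up) = Some (base (sp S), u)"
    and "zero_visits M (fst r) (snd pre @ snd up) = 0"
    and "positive_run M (base (sp S), u) (snd cap) (base (sn T), v)"
    and "run M (base (sn T), v) (snd down @ snd suf) = Some (target M r)"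
    and "zero_visits M (fst r) (snd r) = zero_visits M (base (sn T), v) (snd down @ snd suf)"
    and "card (states M) < u" and "card (states M) < v"
proof -
  have ch: "chain M (fst r) [pre, up, cap, down, suf]"
    and r: "snd r = ((snd pre @ snd up) @ snd cap) @ snd down @ snd suf"
    and cap: "fst (source cap) = base (sp S)" "fst (target M cap) = base (sn T)"
    and n: "card (states M) < u" "card (states M) < snd (source down)"
    using dec unfolding good_normal_decomp_def Let_def is_concat_def u_def by auto
  then have runs: "run M (fst r) (snd pre) = Some (fst up)" "run M (fst up) (snd up) = Some (fst cap)"
    "run M (fst cap) (snd cap) = Some (fst down)" "run M (fst down) (snd down) = Some (fst suf)"
    "run M (fst suf) (snd suf) = Some (target M suf)"
    using run_path[of M pre] run_path[of M up] run_path[of M cap] run_path[of M down] run_path[of M suf]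
    by auto
  have up: "fst cap = (base (sp S), u)" and down: "fst down = (base (sn T), v)"
    using ch cap unfolding u_def v_def source_def by (auto intro: prod_eqI)
  show pu: "run M (fst r) (snd pre @ snd up) = Some (base (sp S), u)"
    using runs up by (simp add: run_append_Some)
  have puc: "run M (fst r) ((snd pre @ snd up) @ snd cap) = Some (base (sn T), v)"
    using run_append_Some[OF pu, of "snd cap"] runs(3) up down by simp
  have ds: "run M (base (sn T), v) (snd down @ snd suf) = Some (target M suf)"
    using runs(4,5) down by (simp add: run_append_Some)
  have "run M (fst r) (snd r) = Some (target M suf)"
    using run_append_Some[OF puc, of "snd down @ snd suf"] ds r by simp
  then have "target M r = target M suf"
    unfolding target_def by simp
  then show "run M (base (sn T), v) (snd down @ snd suf) = Some (target M r)"
    using ds by simp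
  show "card (states M) < u" by (fact n(1))
  show v: "card (states M) < v"
    using n(2) down unfolding source_def by simp
  have pos: "\<forall>x\<in>set (tl (confs M (fst r) ((snd pre @ snd up) @ snd cap))). 0 < snd x"
    using arc_prefix_positive[OF arc r puc] v by simp
  moreover have "tl (confs M (fst r) ((snd pre @ snd up) @ snd cap))
      = tl (confs M (fst r) (snd pre @ snd up)) @ tl (confs M (base (sp S), u) (snd cap))"
    by (rule tl_confs_append[OF pu])
  ultimately have pos_pu: "\<forall>x\<in>set (tl (confs M (fst r) (snd pre @ snd up))). 0 < snd x"
    and pos_cap: "\<forall>x\<in>set (tl (confs M (base (sp S), u) (snd cap))). 0 < snd x"
    by auto
  show "zero_visits M (fst r) (snd pre @ snd up) = 0"
    using zero_visits_eq_0[OF pos_pu] .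
  show "positive_run M (base (sp S), u) (snd cap) (base (sn T), v)"
    using pos_cap n(1) runs(3) up down unfolding positive_run_def
    by (subst confs_eq_Cons_tl) auto
  show "zero_visits M (fst r) (snd r) = zero_visits M (base (sn T), v) (snd down @ snd suf)"
    using zero_visits_append[OF puc] zero_visits_eq_0[OF pos] r by simp
qed

text \<open>Resynchronisation: by Bezout, x rounds of \<sigma> from level u overshoot u' by exactly
  y rounds of \<tau>; the run ts is lifted by that excess and the y rounds of \<tau> bring it back down.\<close>
lemma positive_run_from_congruent_level:
  assumes wf: "wf_ocs M"
    and \<sigma>: "simple_cycle M \<sigma>" "0 < eff \<sigma>" and \<tau>: "simple_cycle M \<tau>" "eff \<tau> < 0"
    and ts: "positive_run M (base \<sigma>, u') ts (base \<tau>, v)"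
    and levels: "card (states M) < u" "card (states M) < v"
    and cong: "gcd (eff \<sigma>) (- eff \<tau>) dvd int u' - int u"
  obtains ts' where "positive_run M (base \<sigma>, u) ts' (base \<tau>, v)"
proof -
  obtain x y :: nat where xy: "int x * eff \<sigma> - int y * - eff \<tau> = int u' - int u" and "int u' \<le> int x"
    using bezout_nat_with_large_coeff[OF \<sigma>(2) _ cong, of "int u'"] \<tau>(2) by auto
  define \<delta> where "\<delta> = nat (int y * - eff \<tau>)"
  have \<delta>: "int \<delta> = int y * - eff \<tau>"
    using \<tau>(2) unfolding \<delta>_def by (simp add: mult_nonneg_nonpos)
  have "int x \<le> int x * eff \<sigma>"
    using \<sigma>(2) by (simp add: mult_le_cancel_left1)
  then have "nat (int u + int x * eff \<sigma>) = u' + \<delta>"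
    using xy \<delta> \<open>int u' \<le> int x\<close> by linarith
  moreover have "\<forall>l\<le>x. int (card (states M)) < int u + int l * eff \<sigma>"
    using levels(1) \<sigma>(2) by (smt (verit) of_nat_0_le_iff of_nat_less_iff zero_le_mult_iff)
  ultimately have up: "positive_run M (base \<sigma>, u) (concat (replicate x \<sigma>)) (base \<sigma>, u' + \<delta>)"
    using positive_run_simple_cycle_power[OF wf \<sigma>(1)] by metis
  have mid: "positive_run M (base \<sigma>, u' + \<delta>) ts (base \<tau>, v + \<delta>)"
    using positive_run_shift[OF ts] .
  have "\<forall>l\<le>y. int (card (states M)) < int (v + \<delta>) + int l * eff \<tau>"
  proof (intro allI impI)
    fix l assume "l \<le> y"
    then have "int l * - eff \<tau> \<le> int y * - eff \<tau>"
      using \<tau>(2) by (intro mult_right_mono) auto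
    then show "int (card (states M)) < int (v + \<delta>) + int l * eff \<tau>"
      using levels(2) \<delta> by simp
  qed
  moreover have "nat (int (v + \<delta>) + int y * eff \<tau>) = v"
    using \<delta> by simp
  ultimately have down: "positive_run M (base \<tau>, v + \<delta>) (concat (replicate y \<tau>)) (base \<tau>, v)"
    using positive_run_simple_cycle_power[OF wf \<tau>(1)] by metis
  show thesis
    using that positive_run_append[OF positive_run_append[OF up mid] down] .
qed

lemma card_le_modulus_if_pairwise_incongruent:
  fixes f :: "'a \<Rightarrow> int"
  assumes "0 < g" "\<And>i j. i \<in> I \<Longrightarrow> j \<in> I \<Longrightarrow> i \<noteq> j \<Longrightarrow> \<not> g dvd f j - f i"
  shows "int (card I) \<le> g"
proof -
  have "inj_on (\<lambda>i. f i mod g) I"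
    using assms(2) by (auto simp: inj_on_def mod_eq_dvd_iff)
  then have "card I = card ((\<lambda>i. f i mod g) ` I)"
    by (simp add: card_image)
  also have "\<dots> \<le> card {0..<g}"
    using assms(1) by (intro card_mono) auto
  finally show ?thesis
    using assms(1) by simp
qed

lemma normal_arc_levels_incongruent:
  assumes st: "standing_setup M sp sn \<alpha> \<beta> \<rho> rs L N Si Ti"
    and ij: "i < j" "i \<in> N" "j \<in> N" "Si i = S" "Si j = S" "Ti i = T" "Ti j = T"
    and di: "good_normal_decomp M sp sn S T (rs ! i) pi ui ci di si ai bi"
    and dj: "good_normal_decomp M sp sn S T (rs ! j) pj uj cj dj sj aj bj"
  shows "\<not> gcd (eff (sp S)) (- eff (sn T)) dvd int (snd (target M uj)) - int (snd (target M ui))"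
proof
  assume cong: "gcd (eff (sp S)) (- eff (sn T)) dvd int (snd (target M uj)) - int (snd (target M ui))"
  have wf: "wf_ocs M" and fc: "fixed_cycles M sp sn"
    and \<rho>: "is_path M \<rho>" "source \<rho> = \<alpha>" "target M \<rho> = \<beta>"
    and min: "\<forall>\<rho>'. is_path M \<rho>' \<and> source \<rho>' = \<alpha> \<and> target M \<rho>' = \<beta> \<longrightarrow> zeros M \<rho> \<le> zeros M \<rho>'"
    and rs: "chain M \<alpha> rs" "snd \<rho> = concat (map snd rs)" and "j < length rs"
    and normal: "good_normal_arc M sp sn S T (rs ! i)" "good_normal_arc M sp sn S T (rs ! j)"
    using st ij unfolding standing_setup_def is_concat_def source_def by auto
  then have arcs: "is_arc M (rs ! i)" "is_arc M (rs ! j)"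
    and \<sigma>: "simple_cycle M (sp S)" "0 < eff (sp S)" and \<tau>: "simple_cycle M (sn T)" "eff (sn T) < 0"
    using fc unfolding good_normal_arc_def fixed_cycles_def by auto
  note I = good_normal_decomp_runs[OF arcs(1) di] and J = good_normal_decomp_runs[OF arcs(2) dj]
  obtain ts where ts: "positive_run M (base (sp S), snd (target M ui)) ts (base (sn T), snd (target M cj))"
    using positive_run_from_congruent_level[OF wf \<sigma> \<tau> J(3) I(6) J(7) cong] .
  define New where "New = (snd pi @ snd ui) @ ts @ snd dj @ snd sj"
  have run_New: "run M (fst (rs ! i)) New = Some (target M (rs ! j))"
    using run_append_Some[OF I(1), of "ts @ snd dj @ snd sj"] ts J(4)
    unfolding New_def positive_run_def by (simp add: run_append_Some)
  have zero_visits_New: "zero_visits M (fst (rs ! i)) New = zero_visits M (fst (rs ! j)) (snd (rs ! j))"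
    using zero_visits_append[OF I(1), of "ts @ snd dj @ snd sj"] I(2) ts J(5) unfolding New_def positive_run_def
    by (simp add: zero_visits_append zero_visits_positive_run[OF ts])
  obtain P P' Q where split: "snd \<rho> = P @ (snd (rs ! i) @ P' @ snd (rs ! j)) @ Q"
    and P: "run M \<alpha> P = Some (fst (rs ! i))"
    and P': "run M (target M (rs ! i)) P' = Some (fst (rs ! j))"
    and paths: "is_path M (rs ! i)" "is_path M (rs ! j)"
    using chain_two_members[OF rs(1) ij(1) \<open>j < length rs\<close>] rs(2) by (metis append_assoc)
  have runs: "run M (fst (rs ! i)) (snd (rs ! i)) = Some (target M (rs ! i))"
    "run M (fst (rs ! j)) (snd (rs ! j)) = Some (target M (rs ! j))"
    using paths by (simp_all add: run_path)
  have "1 \<le> zero_visits M (fst (rs ! i)) (snd (rs ! i))"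
    using zero_visits_ge_1[OF I(4)] I(5,7) arcs(1) unfolding is_arc_def by simp
  then have "zero_visits M (fst (rs ! j)) (snd (rs ! j))
      < zero_visits M (fst (rs ! i)) (snd (rs ! i) @ P' @ snd (rs ! j))"
    using runs P' by (simp add: zero_visits_append run_append_Some)
  moreover have "zero_visits M (fst (rs ! i)) (snd (rs ! i) @ P' @ snd (rs ! j)) \<le> zero_visits M (fst (rs ! i)) New"
    using zero_visits_le_of_min_zeros[OF min \<rho> split P _ run_New] runs P' by (simp add: run_append_Some)
  ultimately show False
    using zero_visits_New by simp
qed

theorem lemma5:
  fixes M :: "'q ocs"
  assumes "standing_setup M sp sn \<alpha> \<beta> \<rho> rs L N Si Ti"
    and "S \<in> sccs M" and "T \<in> sccs M"
    and "{i \<in> N. Si i = S \<and> Ti i = T} \<noteq> {}"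
  shows "int (card {i \<in> N. Si i = S \<and> Ti i = T}) \<le> gcd (eff (sp S)) (- eff (sn T))"
proof -
  let ?I = "{i \<in> N. Si i = S \<and> Ti i = T}" and ?g = "gcd (eff (sp S)) (- eff (sn T))"
  have normal: "\<And>i. i \<in> ?I \<Longrightarrow> good_normal_arc M sp sn S T (rs ! i)"
    using assms(1) unfolding standing_setup_def by auto
  then have "pos_enabled M S"
    using assms(4) unfolding good_normal_arc_def by blast
  then have "0 < ?g"
    using assms(1,2) unfolding standing_setup_def fixed_cycles_def by auto
  have "\<forall>i\<in>?I. \<exists>up pre cap down suf a b. good_normal_decomp M sp sn S T (rs ! i) pre up cap down suf a b"
    using normal unfolding good_normal_arc_def by blast
  then obtain U where U: "\<forall>i\<in>?I. \<exists>pre cap down suf a b.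
      good_normal_decomp M sp sn S T (rs ! i) pre (U i) cap down suf a b"
    by (rule bchoice[THEN exE]) blast
  have incongruent: "\<not> ?g dvd int (snd (target M (U j))) - int (snd (target M (U i)))"
    if ij: "i \<in> ?I" "j \<in> ?I" "i < j" for i j
  proof -
    obtain pi ci di si ai bi where "good_normal_decomp M sp sn S T (rs ! i) pi (U i) ci di si ai bi"
      using ij(1) U by blast
    moreover obtain pj cj dj sj aj bj where "good_normal_decomp M sp sn S T (rs ! j) pj (U j) cj dj sj aj bj"
      using ij(2) U by blast
    ultimately show ?thesis
      using ij normal_arc_levels_incongruent[OF assms(1) \<open>i < j\<close>] by blast
  qed
  show ?thesis
  proof (rule card_le_modulus_if_pairwise_incongruent[of _ _ "\<lambda>i. int (snd (target M (U i)))"])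
    fix i j assume "i \<in> ?I" "j \<in> ?I" "i \<noteq> j"
    then show "\<not> ?g dvd int (snd (target M (U j))) - int (snd (target M (U i)))"
      using incongruent[of i j] incongruent[of j i] by (metis dvd_minus_iff linorder_neqE_nat minus_diff_eq)
  qed (fact \<open>0 < ?g\<close>)
qed

end
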